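(* Let $n\in\mathbb{N}$ with $n\ge2$, $S:=\{0,\dots,n-1\}$, and let $C\subseteq\operatorname{codes}(S)$ be a fundamental set. Let $\rho,\sigma\in(0,\infty)^S$ be such that $\alpha(x)|_\rho\le 2\pi\le\alpha(x)|_\sigma$ for all $x\in C$. Then \[ \frac{\sigma(n-2)}{\sigma(n-1)}\le\frac{\rho(n-2)}{\rho(n-1)}. \]
   Context: A coronal code over $S$ of length $m$ is a formal string $x=c:p_0p_1\dots p_{m-1}$ with $c,p_i\in S$; $\operatorname{center}(x)=c$, $\operatorname{petals}(x)=\{p_0,\dots,p_{m-1}\}$; codes are identified up to rotation/reversal of the petal string, giving $\operatorname{codes}(S)$. For $a,b,c\in S$ (indeterminates), $c^a_b:=\arccos\!\Big(\frac{(c+a)^2+(c+b)^2-(a+b)^2}{2(c+a)(c+b)}\Big)$, and $\alpha(x):=\sum_{i=0}^{m-1} c^{p_i}_{p_{i+1\bmod m}}$. For $\rho\in(0,\infty)^S$, $\alpha(x)|_\rho$ is the value obtained by substituting $\rho(s)$ for each symbol $s$. A nonempty $C\subseteq\operatorname{codes}(S)$ is fundamental if $\{\operatorname{center}(x):x\in C\}=\{0,\dots,n-2\}$ and for every nonempty $K\subseteq\{0,\dots,n-2\}$ there is $D\subseteq C$ with $\{\operatorname{center}(x):x\in D\}=K$ and $\big(\bigcup_{x\in D}\operatorname{petals}(x)\big)\setminus K\ne\emptyset$. *)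

theory Defs
  imports Complex_Main
begin

text \<open>A coronal code c:p_0...p_{m-1} is represented by the pair (c, [p_0,...,p_{m-1}]).
  All notions below (center, petals, alpha) are invariant under rotation/reversal of the
  petal string, so a set of codes is represented by a set of representatives.\<close>

type_synonym 'a coronal_code = "'a \<times> 'a list"

definition center :: "'a coronal_code \<Rightarrow> 'a" where
  "center x = fst x"

definition petals :: "'a coronal_code \<Rightarrow> 'a set" where
  "petals x = set (snd x)"

definition codes :: "'a set \<Rightarrow> 'a coronal_code set" where
  "codes S = {(c, ps). c \<in> S \<and> set ps \<subseteq> S \<and> ps \<noteq> []}"

definition corner_angle :: "real \<Rightarrow> real \<Rightarrow> real \<Rightarrow> real" where
  "corner_angle c a b =
     arccos (((c + a)\<^sup>2 + (c + b)\<^sup>2 - (a + b)\<^sup>2) / (2 * (c + a) * (c + b)))"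

definition alpha_at :: "('a \<Rightarrow> real) \<Rightarrow> 'a coronal_code \<Rightarrow> real" where
  "alpha_at \<rho> x = (let c = fst x; ps = snd x; m = length ps in
     (\<Sum>i<m. corner_angle (\<rho> c) (\<rho> (ps ! i)) (\<rho> (ps ! ((i + 1) mod m)))))"

definition fundamental :: "nat \<Rightarrow> nat coronal_code set \<Rightarrow> bool" where
  "fundamental n C \<longleftrightarrow> C \<noteq> {} \<and> center ` C = {0..n-2} \<and>
     (\<forall>K. K \<noteq> {} \<longrightarrow> K \<subseteq> {0..n-2} \<longrightarrow>
        (\<exists>D \<subseteq> C. center ` D = K \<and> (\<Union>x\<in>D. petals x) - K \<noteq> {}))"

end

theory Submission imports Defs begin

text \<open>Compare the radii through the ratio \<sigma>/\<rho>. If this ratio were larger at n-2 than at n-1,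
  its maximum over the symbols would be attained only on centers 0..n-2, and fundamentality
  yields a code whose center attains the maximum while some petal does not. The corner angle
  c^a_b = arccos (1 - 2 / ((1 + c/a) (1 + c/b))) decreases in the ratios c/a and c/b, so passing
  from \<rho> to \<sigma> weakly decreases every corner angle of that code and strictly decreases one of
  them, contradicting the angle-sum bounds.\<close>

lemma corner_angle_eq_arccos:
  assumes "c > 0" "a > 0" "b > 0"
  shows "corner_angle c a b = arccos (1 - 2 / ((1 + c/a) * (1 + c/b)))"
proof -
  have "(1 + c/a) * (1 + c/b) = (c + a) * (c + b) / (a * b)"
    using assms by (simp add: field_simps)
  then have "1 - 2 / ((1 + c/a) * (1 + c/b)) = 1 - 2 * (a * b) / ((c + a) * (c + b))"
    using assms by simp
  also have "\<dots> = ((c + a)\<^sup>2 + (c + b)\<^sup>2 - (a + b)\<^sup>2) / (2 * (c + a) * (c + b))"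
    using assms by (simp add: divide_simps power2_eq_square) (simp add: algebra_simps)
  finally show ?thesis
    unfolding corner_angle_def by simp
qed

lemma corner_angle_commute: "corner_angle c a b = corner_angle c b a"
  unfolding corner_angle_def by (simp add: algebra_simps)

lemma arccos_one_minus_inverse_mono:
  assumes "1 \<le> t" "t \<le> t'"
  shows "arccos (1 - 2 / t') \<le> arccos (1 - 2 / t)"
proof (rule arccos_le_arccos)
  show "-1 \<le> 1 - 2 / t" "1 - 2 / t' \<le> 1"
    using assms by (simp_all add: divide_le_eq)
  show "1 - 2 / t \<le> 1 - 2 / t'"
    using assms by (simp add: frac_le)
qed

lemma arccos_one_minus_inverse_strict_mono:
  assumes "1 \<le> t" "t < t'"
  shows "arccos (1 - 2 / t') < arccos (1 - 2 / t)"
proof (rule arccos_less_arccos)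
  show "-1 \<le> 1 - 2 / t" "1 - 2 / t' \<le> 1"
    using assms by (simp_all add: divide_le_eq)
  show "1 - 2 / t < 1 - 2 / t'"
    using assms by (simp add: frac_less2)
qed

lemma corner_angle_antimono:
  assumes "c > 0" "a > 0" "b > 0" "c' > 0" "a' > 0" "b' > 0"
    and "c/a \<le> c'/a'" "c/b \<le> c'/b'"
  shows "corner_angle c' a' b' \<le> corner_angle c a b"
proof -
  have "1 \<le> (1 + c/a) * (1 + c/b)"
    using assms by (simp add: algebra_simps)
  moreover have "(1 + c/a) * (1 + c/b) \<le> (1 + c'/a') * (1 + c'/b')"
    using assms by (intro mult_mono) auto
  ultimately show ?thesis
    using assms by (simp add: corner_angle_eq_arccos arccos_one_minus_inverse_mono)
qed

lemma corner_angle_strict_antimono: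
  assumes "c > 0" "a > 0" "b > 0" "c' > 0" "a' > 0" "b' > 0"
    and "c/a < c'/a'" "c/b \<le> c'/b'"
  shows "corner_angle c' a' b' < corner_angle c a b"
proof -
  have "1 \<le> (1 + c/a) * (1 + c/b)"
    using assms by (simp add: algebra_simps)
  moreover have "(1 + c/a) * (1 + c/b) < (1 + c'/a') * (1 + c/b)"
    using assms by (intro mult_strict_right_mono) (auto simp: add_pos_pos)
  moreover have "(1 + c'/a') * (1 + c/b) \<le> (1 + c'/a') * (1 + c'/b')"
    using assms by (intro mult_left_mono) auto
  ultimately show ?thesis
    using assms by (simp add: corner_angle_eq_arccos arccos_one_minus_inverse_strict_mono)
qed

lemma alpha_at_less_if_center_ratio_maximal:
  fixes \<rho> \<sigma> :: "'a \<Rightarrow> real"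
  assumes pos: "\<forall>s\<in>insert c (set ps). \<rho> s > 0 \<and> \<sigma> s > 0"
    and le: "\<forall>q\<in>set ps. \<sigma> q / \<rho> q \<le> \<sigma> c / \<rho> c"
    and "p \<in> set ps" and lt: "\<sigma> p / \<rho> p < \<sigma> c / \<rho> c"
  shows "alpha_at \<sigma> (c, ps) < alpha_at \<rho> (c, ps)"
proof -
  define m where "m = length ps"
  obtain i where i: "i < m" "ps ! i = p"
    using \<open>p \<in> set ps\<close> unfolding m_def by (metis in_set_conv_nth)
  have petal: "ps ! (j mod m) \<in> set ps" for j
  proof -
    have "j mod m < m" using i(1) by simp
    then show ?thesis unfolding m_def by (rule nth_mem)
  qed
  have ratio_le: "\<rho> c / \<rho> q \<le> \<sigma> c / \<sigma> q" if "q \<in> set ps" for q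
    using le pos that by (auto simp: field_simps)
  have ratio_lt: "\<rho> c / \<rho> p < \<sigma> c / \<sigma> p"
    using lt pos \<open>p \<in> set ps\<close> by (auto simp: field_simps)
  let ?angle = "\<lambda>\<tau> j. corner_angle (\<tau> c) (\<tau> (ps ! j)) (\<tau> (ps ! ((j + 1) mod m)))"
  have "?angle \<sigma> j \<le> ?angle \<rho> j" if "j < m" for j
    using petal[of j] petal[of "j + 1"] that pos
    by (intro corner_angle_antimono ratio_le) auto
  moreover have "?angle \<sigma> i < ?angle \<rho> i"
    using petal[of "i + 1"] i pos \<open>p \<in> set ps\<close>
    by (intro corner_angle_strict_antimono ratio_le ratio_lt[folded i(2)]) auto
  ultimately have "(\<Sum>j<m. ?angle \<sigma> j) < (\<Sum>j<m. ?angle \<rho> j)"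
    using i(1) by (intro sum_strict_mono_ex1) auto
  then show ?thesis
    unfolding alpha_at_def m_def Let_def by simp
qed

lemma fundamental_obtains_center_maximal_code:
  fixes r :: "nat \<Rightarrow> real"
  assumes "n \<ge> 2" "C \<subseteq> codes {0..<n}" "fundamental n C"
    and "s \<le> n - 2" "r (n - 1) < r s"
  obtains c ps where "(c, ps) \<in> C" "\<forall>q\<in>set ps. r q \<le> r c" "\<exists>p\<in>set ps. r p < r c"
proof -
  define M where "M = Max (r ` {0..<n})"
  have le_M: "r q \<le> M" if "q < n" for q
    unfolding M_def using that by auto
  have "s < n"
    using assms(1,4) by linarith
  then have "r (n - 1) < M"
    using assms(5) le_M[of s] by linarith
  have "M \<in> r ` {0..<n}"
    unfolding M_def using assms(1) by (intro Max_in) auto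
  then obtain s0 where s0: "s0 < n" "r s0 = M" by auto
  have "s0 \<noteq> n - 1"
    using s0 \<open>r (n - 1) < M\<close> by auto
  define K where "K = {k \<in> {0..n-2}. r k = M}"
  have "s0 \<le> n - 2"
    using s0(1) \<open>s0 \<noteq> n - 1\<close> by simp
  then have "K \<noteq> {}" "K \<subseteq> {0..n-2}"
    using s0(2) unfolding K_def by auto
  then obtain D where D: "D \<subseteq> C" "center ` D = K" "(\<Union>x\<in>D. petals x) - K \<noteq> {}"
    using assms(3) unfolding fundamental_def by metis
  then obtain c ps p where x: "(c, ps) \<in> D" "p \<in> set ps" "p \<notin> K"
    unfolding petals_def by fastforce
  have in_C: "(c, ps) \<in> C" and petals_below: "set ps \<subseteq> {0..<n}"
    using x(1) D(1) assms(2) unfolding codes_def by auto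
  have "r c = M"
    using D(2) x(1) unfolding K_def center_def by force
  moreover have "r p < M"
  proof (cases "p \<le> n - 2")
    case True
    then show ?thesis
      using x(2,3) petals_below le_M[of p] unfolding K_def by force
  next
    case False
    then have "p = n - 1"
      using x(2) petals_below by force
    then show ?thesis
      using \<open>r (n - 1) < M\<close> by simp
  qed
  ultimately show ?thesis
    using that in_C x(2) petals_below le_M by fastforce
qed

theorem lemma5p1:
  fixes n :: nat and C :: "nat coronal_code set" and \<rho> \<sigma> :: "nat \<Rightarrow> real"
  assumes "n \<ge> 2"
    and "C \<subseteq> codes {0..<n}"
    and "fundamental n C"
    and "\<forall>s\<in>{0..<n}. \<rho> s > 0"
    and "\<forall>s\<in>{0..<n}. \<sigma> s > 0"
    and "\<forall>x\<in>C. alpha_at \<rho> x \<le> 2 * pi \<and> 2 * pi \<le> alpha_at \<sigma> x"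
  shows "\<sigma> (n - 2) / \<sigma> (n - 1) \<le> \<rho> (n - 2) / \<rho> (n - 1)"
proof (rule ccontr)
  assume "\<not> ?thesis"
  then have "\<sigma> (n - 1) / \<rho> (n - 1) < \<sigma> (n - 2) / \<rho> (n - 2)"
    using assms(1,4,5) by (simp add: field_simps)
  then obtain c ps where x: "(c, ps) \<in> C"
      and "\<forall>q\<in>set ps. \<sigma> q / \<rho> q \<le> \<sigma> c / \<rho> c" "\<exists>p\<in>set ps. \<sigma> p / \<rho> p < \<sigma> c / \<rho> c"
    using fundamental_obtains_center_maximal_code[OF assms(1-3), of "n - 2" "\<lambda>s. \<sigma> s / \<rho> s"]
    by auto
  moreover have "\<forall>s\<in>insert c (set ps). \<rho> s > 0 \<and> \<sigma> s > 0"
    using x assms(2,4,5) unfolding codes_def by auto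
  ultimately have "alpha_at \<sigma> (c, ps) < alpha_at \<rho> (c, ps)"
    using alpha_at_less_if_center_ratio_maximal by metis
  then show False
    using x assms(6) by fastforce
qed

end
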